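(* Let $(X,S)$ be an association scheme with the trivial partition $S=\{\mathbf{1},\sigma\}$, where $\mathbf{1}=\{(x,x)\mid x\in X\}$ and $\sigma=(X\times X)\setminus\mathbf{1}$. Then every self-homotopy equivalence of the quasi-schemoid $\jmath(X,S)$ is an isomorphism.
   Context: An association scheme is a pair $(X,S)$ with $X$ a finite set and $S$ a partition of $X\times X$ containing $1_X=\{(x,x)\mid x\in X\}$, closed under $g\mapsto g^*=\{(y,x)\mid(x,y)\in g\}$, such that for all $e,f,g\in S$ the number $\sharp\{y\in X\mid(x,y)\in e,(y,z)\in f\}$ is the same for all $(x,z)\in g$. The quasi-schemoid $\jmath(X,S)=(\mathcal{C},S)$ has $ob(\mathcal{C})=X$, $\mathrm{Hom}_{\mathcal{C}}(y,x)=\{(x,y)\}$, composition $(z,x)\circ(x,y)=(z,y)$, and partition $S$ of $mor(\mathcal{C})=X\times X$. A quasi-schemoid is a small category with a partition of its morphisms satisfying: for blocks $\sigma,\tau,\mu$ and $f,g\in\mu$ the number of composable pairs $(a,b)\in\sigma\times\tau$ with $a\circ b=f$ equals that with $a\circ b=g$. A morphism of quasi-schemoids is a functor sending each block of the source partition into some block of the target partition. Product: $(\mathcal{C},S)\times(\mathcal{E},S')=(\mathcal{C}\times\mathcal{E},\{\sigma\times\tau\})$. $[1]$ has objects $0,1$ and one non-identity morphism $0\to1$; $I=([1],\{\{f\}\}_{f})$. A homotopy $H\colon F\Rightarrow G$ is a morphism $H\colon(\mathcal{C},S)\times I\to(\mathcal{D},S')$ with $H\circ\varepsilon_0=F$,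 $H\circ\varepsilon_1=G$ ($\varepsilon_i(a)=(a,i)$, $\varepsilon_i(f)=(f,1_i)$). $F\sim G$ if there is a homotopy $F\Rightarrow G$ or $G\Rightarrow F$; $F\simeq G$ if there is a finite chain $F=F_0\sim\cdots\sim F_n=G$. A self-homotopy equivalence of $A$ is a morphism $F\colon A\to A$ for which there exists $G\colon A\to A$ with $FG\simeq1$ and $GF\simeq1$. *)

theory Defs
  imports Main
begin

definition is_partition :: "'a set \<Rightarrow> 'a set set \<Rightarrow> bool" where
  "is_partition U P \<longleftrightarrow> (\<forall>B\<in>P. B \<noteq> {} \<and> B \<subseteq> U) \<and> \<Union>P = U \<and>
     (\<forall>B\<in>P. \<forall>C\<in>P. B \<noteq> C \<longrightarrow> B \<inter> C = {})"

definition assoc_scheme :: "'a set \<Rightarrow> ('a \<times> 'a) set set \<Rightarrow> bool" where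
  "assoc_scheme X S \<longleftrightarrow> finite X \<and> is_partition (X \<times> X) S \<and> Id_on X \<in> S \<and>
     (\<forall>g\<in>S. converse g \<in> S) \<and>
     (\<forall>e\<in>S. \<forall>f\<in>S. \<forall>g\<in>S. \<forall>p\<in>g. \<forall>q\<in>g.
        card {y\<in>X. (fst p, y) \<in> e \<and> (y, snd p) \<in> f} =
        card {y\<in>X. (fst q, y) \<in> e \<and> (y, snd q) \<in> f})"

(* The trivial partition {1, sigma} (sigma omitted when empty, i.e. |X| = 1). *)
definition trivial_part :: "'a set \<Rightarrow> ('a \<times> 'a) set set" where
  "trivial_part X = {Id_on X, (X \<times> X) - Id_on X} - {{}}"

(* Thin quasi-schemoids: a category in which every Hom-set has at most one element.
   A morphism y -> x is encoded as the pair (x, y) (so Hom(y,x) = {(x,y)}, as for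
   jmath(X,S)); composition is (z,x) o (x,y) = (z,y), identities are (x,x).
   A functor F between thin categories is determined by its object map:
   it sends the morphism (a,b) to the unique morphism (F a, F b).  *)
definition qs_morph ::
  "'o set \<Rightarrow> ('o \<times> 'o) set \<Rightarrow> ('o \<times> 'o) set set \<Rightarrow>
   'p set \<Rightarrow> ('p \<times> 'p) set \<Rightarrow> ('p \<times> 'p) set set \<Rightarrow> ('o \<Rightarrow> 'p) \<Rightarrow> bool" where
  "qs_morph Ob Mor P Ob' Mor' P' F \<longleftrightarrow>
     (\<forall>a\<in>Ob. F a \<in> Ob') \<and> (\<forall>(a,b)\<in>Mor. (F a, F b) \<in> Mor') \<and>
     (\<forall>B\<in>P. \<exists>B'\<in>P'. \<forall>(a,b)\<in>B. (F a, F b) \<in> B')"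

definition prod_mor :: "('o \<times> 'o) set \<Rightarrow> ('q \<times> 'q) set \<Rightarrow> (('o \<times> 'q) \<times> ('o \<times> 'q)) set" where
  "prod_mor M M' = {((a,a'),(b,b')) | a b a' b'. (a,b) \<in> M \<and> (a',b') \<in> M'}"

definition prod_part :: "('o \<times> 'o) set set \<Rightarrow> ('q \<times> 'q) set set \<Rightarrow> (('o \<times> 'q) \<times> ('o \<times> 'q)) set set" where
  "prod_part P P' = {prod_mor B B' | B B'. B \<in> P \<and> B' \<in> P'}"

(* I = ([1], discrete partition): objects 0,1; morphisms 1_0=(0,0), 1_1=(1,1), 0->1 = (1,0) *)
definition I_ob :: "nat set" where "I_ob = {0,1}"
definition I_mor :: "(nat \<times> nat) set" where "I_mor = {(0,0),(1,1),(1,0)}"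
definition I_part :: "(nat \<times> nat) set set" where "I_part = (\<lambda>f. {f}) ` I_mor"

(* jmath(X,S): objects X, morphisms X x X, partition S. Functors are compared
   on objects of X (F o eps_i = G as functors means equality of object maps on X). *)
definition j_morph :: "'a set \<Rightarrow> ('a \<times> 'a) set set \<Rightarrow> ('a \<Rightarrow> 'a) \<Rightarrow> bool" where
  "j_morph X S F \<longleftrightarrow> qs_morph X (X \<times> X) S X (X \<times> X) S F"

definition j_homotopy :: "'a set \<Rightarrow> ('a \<times> 'a) set set \<Rightarrow> ('a \<Rightarrow> 'a) \<Rightarrow> ('a \<Rightarrow> 'a) \<Rightarrow> ('a \<times> nat \<Rightarrow> 'a) \<Rightarrow> bool" where
  "j_homotopy X S F G H \<longleftrightarrow>
     qs_morph (X \<times> I_ob) (prod_mor (X \<times> X) I_mor) (prod_part S I_part) X (X \<times> X) S H \<and>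
     (\<forall>x\<in>X. H (x, 0) = F x) \<and> (\<forall>x\<in>X. H (x, 1) = G x)"

definition j_htp_step :: "'a set \<Rightarrow> ('a \<times> 'a) set set \<Rightarrow> ('a \<Rightarrow> 'a) \<Rightarrow> ('a \<Rightarrow> 'a) \<Rightarrow> bool" where
  "j_htp_step X S F G \<longleftrightarrow> (\<exists>H. j_homotopy X S F G H) \<or> (\<exists>H. j_homotopy X S G F H)"

definition j_homotopic :: "'a set \<Rightarrow> ('a \<times> 'a) set set \<Rightarrow> ('a \<Rightarrow> 'a) \<Rightarrow> ('a \<Rightarrow> 'a) \<Rightarrow> bool" where
  "j_homotopic X S = (j_htp_step X S)\<^sup>*\<^sup>*"

definition j_self_heq :: "'a set \<Rightarrow> ('a \<times> 'a) set set \<Rightarrow> ('a \<Rightarrow> 'a) \<Rightarrow> bool" where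
  "j_self_heq X S F \<longleftrightarrow> j_morph X S F \<and>
     (\<exists>G. j_morph X S G \<and> j_homotopic X S (F \<circ> G) id \<and> j_homotopic X S (G \<circ> F) id)"

definition j_iso :: "'a set \<Rightarrow> ('a \<times> 'a) set set \<Rightarrow> ('a \<Rightarrow> 'a) \<Rightarrow> bool" where
  "j_iso X S F \<longleftrightarrow> j_morph X S F \<and>
     (\<exists>G. j_morph X S G \<and> (\<forall>x\<in>X. G (F x) = x) \<and> (\<forall>x\<in>X. F (G x) = x))"

end

theory Submission
  imports Defs
begin

text \<open>For the trivial partition an endomorphism sends all of \<open>\<sigma>\<close> into one block, so it is
either injective or constant. Along a homotopy \<open>H\<close> the block \<open>\<sigma> \<times> (0 \<rightarrow> 1)\<close> relates every value
of one end to every value of the other; if one end were constant with value \<open>c\<close> and the other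
injective, hence surjective on the finite set \<open>X\<close>, then \<open>(c, z)\<close> would lie in a single block for
all \<open>z \<in> X\<close>, including \<open>z = c\<close>, which forces \<open>X = {c}\<close>. So homotopic maps are injective
together; as \<open>F \<circ> G \<simeq> id\<close>, \<open>F\<close> is a bijection of \<open>X\<close>, and every bijection is an automorphism.\<close>

lemma trivial_part_cases:
  assumes "B \<in> trivial_part X"
  obtains "B = Id_on X" | "B = X \<times> X - Id_on X"
  using assms unfolding trivial_part_def by blast

lemma off_diag_in_trivial_part:
  assumes "a \<in> X" "a' \<in> X" "a \<noteq> a'"
  shows "X \<times> X - Id_on X \<in> trivial_part X"
  using assms by (auto simp: trivial_part_def)

lemma trivial_part_diag_block:
  assumes "B \<in> trivial_part X" "(u, u) \<in> B" "(v, w) \<in> B"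
  shows "v = w"
  using assms by (auto elim: trivial_part_cases)

lemma trivial_part_single_row:
  assumes "B \<in> trivial_part X" and row: "\<forall>z\<in>X. (c, z) \<in> B \<or> (z, c) \<in> B"
  shows "X \<subseteq> {c}"
proof
  fix z assume "z \<in> X"
  have "B \<subseteq> X \<times> X" using assms(1) by (auto elim: trivial_part_cases)
  with row \<open>z \<in> X\<close> have "c \<in> X" by blast
  with row have "(c, c) \<in> B" by blast
  with row \<open>z \<in> X\<close> show "z \<in> {c}" using trivial_part_diag_block[OF assms(1)] by blast
qed

lemma trivial_part_inj_or_const:
  assumes "B \<in> trivial_part X"
    and FB: "\<forall>x\<in>X. \<forall>y\<in>X. x \<noteq> y \<longrightarrow> (F x, F y) \<in> B"
  shows "inj_on F X \<or> (\<forall>x\<in>X. \<forall>y\<in>X. F x = F y)"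
  using assms(1)
proof (cases rule: trivial_part_cases)
  case 1
  have "F x = F y" if "x \<in> X" "y \<in> X" for x y
  proof (cases "x = y")
    case False
    with FB that have "(F x, F y) \<in> B" by blast
    with 1 show ?thesis by (simp add: Id_on_iff)
  qed simp
  then show ?thesis by blast
next
  case 2
  have "x = y" if "x \<in> X" "y \<in> X" "F x = F y" for x y
  proof (rule ccontr)
    assume "x \<noteq> y"
    with FB that(1,2) have "(F x, F y) \<in> B" by blast
    with 2 \<open>F x = F y\<close> show False by (simp add: Id_on_iff)
  qed
  then show ?thesis unfolding inj_on_def by blast
qed

lemma bij_betw_j_morph_trivial_part:
  assumes "bij_betw K X X"
  shows "j_morph X (trivial_part X) K"
proof -
  have KX: "\<forall>x\<in>X. K x \<in> X" using assms by (auto dest: bij_betw_apply)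
  have "\<exists>B'\<in>trivial_part X. \<forall>(a, b)\<in>B. (K a, K b) \<in> B'" if B: "B \<in> trivial_part X" for B
  proof -
    have "(K a, K b) \<in> B" if "(a, b) \<in> B" for a b
      using B
    proof (cases rule: trivial_part_cases)
      case 1
      with \<open>(a, b) \<in> B\<close> KX show ?thesis by (auto simp: Id_on_iff)
    next
      case 2
      with \<open>(a, b) \<in> B\<close> have "a \<in> X" "b \<in> X" "a \<noteq> b" by (auto simp: Id_on_iff)
      then have "K a \<noteq> K b" using bij_betw_imp_inj_on[OF assms] by (auto dest: inj_onD)
      with 2 KX \<open>a \<in> X\<close> \<open>b \<in> X\<close> show ?thesis by (simp add: Id_on_iff)
    qed
    with B show ?thesis by blast
  qed
  with KX show ?thesis unfolding j_morph_def qs_morph_def by auto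
qed

lemma qs_morph_block:
  assumes "qs_morph Ob M P Ob' M' P' F" "B \<in> P"
  shows "\<exists>B'\<in>P'. \<forall>(a, b)\<in>B. (F a, F b) \<in> B'"
  using assms unfolding qs_morph_def by (elim conjE) (rule bspec)

lemma j_homotopy_block:
  assumes H: "j_homotopy X S F G H" and "B \<in> S" "(i, j) \<in> I_mor"
  shows "\<exists>B'\<in>S. \<forall>(x, y)\<in>B. (H (x, i), H (y, j)) \<in> B'"
proof -
  have "{(i, j)} \<in> I_part" using assms(3) unfolding I_part_def by blast
  with assms(2) have block: "prod_mor B {(i, j)} \<in> prod_part S I_part"
    unfolding prod_part_def by blast
  have "qs_morph (X \<times> I_ob) (prod_mor (X \<times> X) I_mor) (prod_part S I_part) X (X \<times> X) S H"
    using H unfolding j_homotopy_def by (rule conjunct1)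
  from qs_morph_block[OF this block] obtain B'
    where "B' \<in> S" and HB': "\<forall>(p, q)\<in>prod_mor B {(i, j)}. (H p, H q) \<in> B'" ..
  have "(H (x, i), H (y, j)) \<in> B'" if "(x, y) \<in> B" for x y
  proof -
    have "((x, i), (y, j)) \<in> prod_mor B {(i, j)}"
      using that unfolding prod_mor_def by blast
    from bspec[OF HB' this] show ?thesis by simp
  qed
  with \<open>B' \<in> S\<close> show ?thesis by auto
qed

lemma j_homotopy_image_subset:
  assumes "j_homotopy X S F G H"
  shows "F ` X \<subseteq> X" "G ` X \<subseteq> X"
proof -
  have "\<forall>p\<in>X \<times> I_ob. H p \<in> X"
    using assms unfolding j_homotopy_def qs_morph_def by (elim conjE)
  moreover have "\<forall>x\<in>X. H (x, 0) = F x" "\<forall>x\<in>X. H (x, 1) = G x"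
    using assms unfolding j_homotopy_def by blast+
  ultimately show "F ` X \<subseteq> X" "G ` X \<subseteq> X" unfolding I_ob_def by auto
qed

lemma j_homotopy_off_diag_block:
  assumes H: "j_homotopy X (trivial_part X) F G H" and "(i, j) \<in> I_mor"
    and "a \<in> X" "a' \<in> X" "a \<noteq> a'"
  obtains B where "B \<in> trivial_part X"
    and "\<forall>x\<in>X. \<forall>y\<in>X. x \<noteq> y \<longrightarrow> (H (x, i), H (y, j)) \<in> B"
proof -
  let ?\<sigma> = "X \<times> X - Id_on X"
  obtain B where B: "B \<in> trivial_part X" and HB: "\<forall>(x, y)\<in>?\<sigma>. (H (x, i), H (y, j)) \<in> B"
    using j_homotopy_block[OF H off_diag_in_trivial_part[OF assms(3-5)] assms(2)] by blast
  have "(H (x, i), H (y, j)) \<in> B" if "x \<in> X" "y \<in> X" "x \<noteq> y" for x y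
  proof -
    have "(x, y) \<in> ?\<sigma>" using that by auto
    from bspec[OF HB this] show ?thesis by simp
  qed
  with B that show ?thesis by blast
qed

lemma j_homotopy_end_inj_or_const:
  assumes H: "j_homotopy X (trivial_part X) F G H" and "(i, i) \<in> I_mor"
    and K: "\<forall>x\<in>X. H (x, i) = K x"
  shows "inj_on K X \<or> (\<forall>x\<in>X. \<forall>y\<in>X. K x = K y)"
proof (cases "\<exists>a\<in>X. \<exists>a'\<in>X. a \<noteq> a'")
  case True
  then obtain a a' where "a \<in> X" "a' \<in> X" "a \<noteq> a'" by blast
  from j_homotopy_off_diag_block[OF H assms(2) this] obtain B where B: "B \<in> trivial_part X"
    and "\<forall>x\<in>X. \<forall>y\<in>X. x \<noteq> y \<longrightarrow> (H (x, i), H (y, i)) \<in> B" .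
  with K have "\<forall>x\<in>X. \<forall>y\<in>X. x \<noteq> y \<longrightarrow> (K x, K y) \<in> B" by simp
  with B show ?thesis by (rule trivial_part_inj_or_const)
qed (auto simp: inj_on_def)

lemma trivial_part_inj_row:
  assumes "finite X" "inj_on K X" "K ` X \<subseteq> X" "B \<in> trivial_part X"
    and row: "\<forall>y\<in>X. (c, K y) \<in> B \<or> (K y, c) \<in> B"
  shows "X \<subseteq> {c}"
proof -
  have surj: "K ` X = X" using endo_inj_surj[OF assms(1,3,2)] .
  have "\<forall>z\<in>X. (c, z) \<in> B \<or> (z, c) \<in> B"
  proof
    fix z assume "z \<in> X"
    with surj obtain y where "y \<in> X" "z = K y" by blast
    with row show "(c, z) \<in> B \<or> (z, c) \<in> B" by simp
  qed
  with assms(4) show ?thesis by (rule trivial_part_single_row)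
qed

lemma j_homotopy_inj_iff:
  assumes fin: "finite X" and H: "j_homotopy X (trivial_part X) F G H"
  shows "inj_on F X \<longleftrightarrow> inj_on G X"
proof (cases "\<exists>a\<in>X. \<exists>a'\<in>X. a \<noteq> a'")
  case False
  then show ?thesis by (auto simp: inj_on_def)
next
  case True
  then obtain a a' where aa': "a \<in> X" "a' \<in> X" "a \<noteq> a'" by blast
  have F: "\<forall>x\<in>X. H (x, 0) = F x" and G: "\<forall>x\<in>X. H (x, 1) = G x"
    using H unfolding j_homotopy_def by blast+
  have I: "(0, 0) \<in> I_mor" "(1, 1) \<in> I_mor" "(1, 0) \<in> I_mor" by (auto simp: I_mor_def)
  have F_cases: "inj_on F X \<or> (\<forall>x\<in>X. \<forall>y\<in>X. F x = F y)"
    and G_cases: "inj_on G X \<or> (\<forall>x\<in>X. \<forall>y\<in>X. G x = G y)"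
    using j_homotopy_end_inj_or_const[OF H] I F G by blast+
  from j_homotopy_off_diag_block[OF H I(3) aa'] obtain B where B: "B \<in> trivial_part X"
    and "\<forall>x\<in>X. \<forall>y\<in>X. x \<noteq> y \<longrightarrow> (H (x, 1), H (y, 0)) \<in> B" .
  with F G have GF: "\<forall>x\<in>X. \<forall>y\<in>X. x \<noteq> y \<longrightarrow> (G x, F y) \<in> B" by simp
  have other: "\<exists>x\<in>X. x \<noteq> y" for y using aa' by metis
  have not_single: "\<not> X \<subseteq> {c}" for c using aa' by blast
  show ?thesis
  proof
    assume "inj_on F X"
    show "inj_on G X"
    proof (rule ccontr)
      assume "\<not> inj_on G X"
      with G_cases have const: "\<forall>x\<in>X. G x = G a" using aa'(1) by blast
      have "\<forall>y\<in>X. (G a, F y) \<in> B \<or> (F y, G a) \<in> B"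
        using GF const other by metis
      with trivial_part_inj_row[OF fin \<open>inj_on F X\<close> j_homotopy_image_subset(1)[OF H] B]
      show False using not_single by blast
    qed
  next
    assume "inj_on G X"
    show "inj_on F X"
    proof (rule ccontr)
      assume "\<not> inj_on F X"
      with F_cases have const: "\<forall>y\<in>X. F y = F a" using aa'(1) by blast
      have "\<forall>x\<in>X. (F a, G x) \<in> B \<or> (G x, F a) \<in> B"
        using GF const other by metis
      with trivial_part_inj_row[OF fin \<open>inj_on G X\<close> j_homotopy_image_subset(2)[OF H] B]
      show False using not_single by blast
    qed
  qed
qed

lemma j_homotopic_inj_iff:
  assumes "finite X" "j_homotopic X (trivial_part X) F G"
  shows "inj_on F X \<longleftrightarrow> inj_on G X"
  using assms(2) unfolding j_homotopic_def
proof (induction rule: rtranclp_induct)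
  case (step G G')
  then show ?case
    using j_homotopy_inj_iff[OF assms(1)] unfolding j_htp_step_def by blast
qed simp

theorem lemma4p1:
  fixes X :: "'a set" and F :: "'a \<Rightarrow> 'a"
  assumes "assoc_scheme X (trivial_part X)"
    and "j_self_heq X (trivial_part X) F"
  shows "j_iso X (trivial_part X) F"
proof -
  have fin: "finite X" using assms(1) unfolding assoc_scheme_def by (rule conjunct1)
  obtain G where mF: "j_morph X (trivial_part X) F" and mG: "j_morph X (trivial_part X) G"
    and FG: "j_homotopic X (trivial_part X) (F \<circ> G) id"
    using assms(2) unfolding j_self_heq_def by blast
  have FX: "F ` X \<subseteq> X" and GX: "G ` X \<subseteq> X"
    using mF mG unfolding j_morph_def qs_morph_def by blast+
  have "inj_on (F \<circ> G) X" using j_homotopic_inj_iff[OF fin FG] by simp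
  then have "inj_on F (G ` X)" and "G ` X = X"
    using inj_on_imageI inj_on_imageI2 endo_inj_surj[OF fin GX] by blast+
  then have bij: "bij_betw F X X"
    using endo_inj_surj[OF fin FX] by (simp add: bij_betw_def)
  have "j_morph X (trivial_part X) (inv_into X F)"
    using bij_betw_j_morph_trivial_part[OF bij_betw_inv_into[OF bij]] .
  moreover have "\<forall>x\<in>X. inv_into X F (F x) = x" "\<forall>x\<in>X. F (inv_into X F x) = x"
    using bij bij_betw_inv_into_left bij_betw_inv_into_right by fast+
  ultimately show ?thesis unfolding j_iso_def using mF by blast
qed

end
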